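(* Let $m=n=1$, $\boldsymbol s=(s_1,s_2)\in\{(1,-1),(-1,1)\}$ and $\tilde{\boldsymbol s}=(s_2,s_1)$. Let $\boldsymbol\lambda$ be typical, $\boldsymbol z$ $h$-generic, let $y$ be a polynomial of degree $l$ representing a solution of the BAE associated to $\boldsymbol s,\boldsymbol\lambda,\boldsymbol z,l$, and let $\tilde y$ be the polynomial with $y\,\tilde y[-s_1]=\varphi^{\boldsymbol s}-\psi^{\boldsymbol s}$. Then \[s_1\frac{T_1^{\boldsymbol s}y[s_1]}{T_1^{\boldsymbol s}[s_1]y}+s_2\frac{T_2^{\boldsymbol s}y[-s_2]}{T_2^{\boldsymbol s}[s_2]y}=\tilde s_1\frac{T_1^{\tilde{\boldsymbol s}}\tilde y[\tilde s_1]}{T_1^{\tilde{\boldsymbol s}}[\tilde s_1]\tilde y}+\tilde s_2\frac{T_2^{\tilde{\boldsymbol s}}\tilde y[-\tilde s_2]}{T_2^{\tilde{\boldsymbol s}}[\tilde s_2]\tilde y}.\]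
   Context: Fix $h\in\mathbb{C}^\times$; $f[i](x)=f(x-ih)$. Polynomial $\mathfrak{gl}_{1|1}$ weights $\lambda^{(1)},\dots,\lambda^{(p)}$; for each $k$ write the weight of $\lambda^{(k)}$ with respect to $\boldsymbol s$ (eigenvalues of $e_{\sigma(1)\sigma(1)},e_{\sigma(2)\sigma(2)}$ on the $\boldsymbol s$-highest weight vector of $L_{\lambda^{(k)}}$, where $\sigma$ is the identity if $\boldsymbol s=(1,-1)$ and the transposition if $\boldsymbol s=(-1,1)$) as $(a_k,b_k)$, $a_k,b_k\in\mathbb{Z}_{\ge0}$, with $b_k=0$ whenever $a_k=0$. $\lambda^{(k)}$ is typical iff $a_k+b_k\ne0$; $\boldsymbol\lambda$ is typical if some $\lambda^{(k)}$ is typical. Set $\tilde a_k=b_k+1,\tilde b_k=a_k-1$ if $a_k+b_k\ne0$ and $\tilde a_k=\tilde b_k=0$ otherwise (these are the weights with respect to $\tilde{\boldsymbol s}$). $\boldsymbol z$ $h$-generic ($z_i-z_j\notin h\mathbb{Z}$). $T_1^{\boldsymbol s}=\prod_k\prod_{j=1}^{a_k}(x-z_k+s_1jh)$, $T_2^{\boldsymbol s}=\prod_k\prod_{j=1}^{b_k}(x-z_k+s_2jh)$, $T_1^{\tilde{\boldsymbol s}}=\prod_k\prod_{j=1}^{\tilde a_k}(x-z_k+\tilde s_1jh)$, $T_2^{\tilde{\boldsymbol s}}=\prod_k\prod_{j=1}^{\tilde b_k}(x-z_k+\tilde s_2jh)$. $\varphi^{\boldsymbol s}=\prod_{k:a_k+b_k\ne0}(x-z_k+s_1a_kh)$,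 $\psi^{\boldsymbol s}=\prod_{k:a_k+b_k\ne0}(x-z_k+s_2b_kh)$. The BAE associated to $\boldsymbol s,\boldsymbol\lambda,\boldsymbol z,l$ in $t_1,\dots,t_l$: $\prod_{k:a_k+b_k\ne0}\frac{t_j-z_k+s_1a_kh}{t_j-z_k+s_2b_kh}=1$, $j=1,\dots,l$, with the requirement that a root of multiplicity $r$ of this equation appears at most $r$ times among the $t_j$; $y=\prod_j(x-t_j)$ represents $(t_1,\dots,t_l)$. *)

theory Defs
  imports Complex_Main "HOL-Computational_Algebra.Polynomial" "HOL-Computational_Algebra.Fraction_Field"
begin

definition shiftp :: "complex \<Rightarrow> int \<Rightarrow> complex poly \<Rightarrow> complex poly" where
  "shiftp h i f = pcompose f [:- (of_int i * h), 1:]"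

definition Tpoly :: "complex \<Rightarrow> (nat \<Rightarrow> complex) \<Rightarrow> nat \<Rightarrow> int \<Rightarrow> (nat \<Rightarrow> nat) \<Rightarrow> complex poly" where
  "Tpoly h z p s c = (\<Prod>k<p. \<Prod>j\<in>{1..c k}. [:- z k + of_int s * of_nat j * h, 1:])"

text \<open>phi^s (with c = a, sgn = s1) and psi^s (with c = b, sgn = s2):
  product over typical k of (x - z_k + sgn c_k h).\<close>
definition phipoly :: "complex \<Rightarrow> (nat \<Rightarrow> complex) \<Rightarrow> nat \<Rightarrow> (nat \<Rightarrow> nat) \<Rightarrow> (nat \<Rightarrow> nat)
    \<Rightarrow> int \<Rightarrow> (nat \<Rightarrow> nat) \<Rightarrow> complex poly" where
  "phipoly h z p a b s c = (\<Prod>k\<in>{k. k < p \<and> a k + b k \<noteq> 0}. [:- z k + of_int s * of_nat (c k) * h, 1:])"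

text \<open>Weights with respect to the swapped parity sequence.\<close>
definition atil :: "(nat \<Rightarrow> nat) \<Rightarrow> (nat \<Rightarrow> nat) \<Rightarrow> nat \<Rightarrow> nat" where
  "atil a b k = (if a k + b k \<noteq> 0 then b k + 1 else 0)"
definition btil :: "(nat \<Rightarrow> nat) \<Rightarrow> (nat \<Rightarrow> nat) \<Rightarrow> nat \<Rightarrow> nat" where
  "btil a b k = (if a k + b k \<noteq> 0 then a k - 1 else 0)"

definition h_generic :: "complex \<Rightarrow> nat \<Rightarrow> (nat \<Rightarrow> complex) \<Rightarrow> bool" where
  "h_generic h p z \<longleftrightarrow> (\<forall>i<p. \<forall>j<p. i \<noteq> j \<longrightarrow> (\<forall>m::int. z i - z j \<noteq> of_int m * h))"

end

theory Submission
  imports Defs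
begin

text \<open>For every typical \<open>k\<close> the factors of \<open>T\<close> and \<open>T[s]\<close> telescope, leaving
  \<open>x - z\<^sub>k + s c\<^sub>k h\<close> over \<open>x - z\<^sub>k\<close>. Hence, with \<open>Z\<close> the product of \<open>x - z\<^sub>k\<close> over typical \<open>k\<close>,
  the four ratios of \<open>T\<close>-polynomials are \<open>\<phi>/Z\<close>, \<open>\<psi>/Z\<close>, \<open>\<psi>[s\<^sub>1]/Z\<close> and \<open>\<phi>[s\<^sub>1]/Z\<close>.
  Since \<open>s\<^sub>2 = -s\<^sub>1\<close>, the left side becomes \<open>s\<^sub>1 y[s\<^sub>1] (\<phi> - \<psi>) / (Z y)\<close> and the
  right side \<open>s\<^sub>1 yt[-s\<^sub>1] (\<phi>[s\<^sub>1] - \<psi>[s\<^sub>1]) / (Z yt)\<close>; the relation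
  \<open>y yt[-s\<^sub>1] = \<phi> - \<psi>\<close> and its shift by \<open>s\<^sub>1\<close> turn both into \<open>s\<^sub>1 y[s\<^sub>1] yt[-s\<^sub>1] / Z\<close>.\<close>

lemma shiftp_linear: "shiftp h i [:c, 1:] = [:c - of_int i * h, 1:]"
  by (simp add: shiftp_def pcompose_pCons)

lemma shiftp_mult: "shiftp h i (f * g) = shiftp h i f * shiftp h i g"
  by (simp add: shiftp_def pcompose_mult)

lemma shiftp_diff: "shiftp h i (f - g) = shiftp h i f - shiftp h i g"
  by (simp add: shiftp_def pcompose_diff)

lemma shiftp_prod: "shiftp h i (prod f A) = (\<Prod>k\<in>A. shiftp h i (f k))"
  by (simp add: shiftp_def pcompose_prod)

lemma shiftp_shiftp: "shiftp h i (shiftp h j f) = shiftp h (i + j) f"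
  unfolding shiftp_def pcompose_assoc[symmetric]
  by (simp add: pcompose_pCons algebra_simps)

lemma shiftp_0: "shiftp h 0 f = f"
  by (simp add: shiftp_def)

lemma shiftp_eq_0_iff: "shiftp h i f = 0 \<longleftrightarrow> f = 0"
  by (simp add: shiftp_def pcompose_eq_0_iff)

lemma prod_linear_telescope:
  "(\<Prod>j\<in>{1..n}. [:c + of_int s * of_nat j * h, 1:]) * [:c, 1:]
   = shiftp h s (\<Prod>j\<in>{1..n}. [:c + of_int s * of_nat j * h, 1:]) * [:c + of_int s * of_nat n * h, 1:]"
proof (induction n)
  case 0
  then show ?case by (simp add: shiftp_def pcompose_1)
next
  case (Suc n)
  define L where "L j = [:c + of_int s * of_nat j * h, 1:]" for j :: nat
  define P where "P n = (\<Prod>j\<in>{1..n}. L j)" for n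
  have P_Suc: "P (Suc n) = L (Suc n) * P n"
    unfolding P_def by (simp add: atLeastAtMostSuc_conv)
  have L_shift: "L n = shiftp h s (L (Suc n))"
    unfolding L_def by (simp add: shiftp_linear algebra_simps)
  have "P (Suc n) * [:c, 1:] = (P n * [:c, 1:]) * L (Suc n)"
    unfolding P_Suc by (simp only: mult_ac)
  also have "\<dots> = shiftp h s (P n) * shiftp h s (L (Suc n)) * L (Suc n)"
    using Suc.IH L_shift unfolding P_def L_def by simp
  also have "\<dots> = shiftp h s (P (Suc n)) * L (Suc n)"
    by (simp add: P_Suc shiftp_mult mult_ac)
  finally show ?case unfolding P_def L_def .
qed

definition typical_zpoly :: "(nat \<Rightarrow> complex) \<Rightarrow> nat \<Rightarrow> (nat \<Rightarrow> nat) \<Rightarrow> (nat \<Rightarrow> nat) \<Rightarrow> complex poly" where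
  "typical_zpoly z p a b = (\<Prod>k\<in>{k. k < p \<and> a k + b k \<noteq> 0}. [:- z k, 1:])"

lemma typical_zpoly_nonzero: "typical_zpoly z p a b \<noteq> 0"
  by (simp add: typical_zpoly_def)

lemma Tpoly_nonzero: "Tpoly h z p s c \<noteq> 0"
  by (simp add: Tpoly_def)

lemma Tpoly_telescope:
  assumes "\<And>k. k < p \<Longrightarrow> a k + b k = 0 \<Longrightarrow> c k = 0"
  shows "Tpoly h z p s c * typical_zpoly z p a b = shiftp h s (Tpoly h z p s c) * phipoly h z p a b s c"
proof -
  let ?K = "{k. k < p \<and> a k + b k \<noteq> 0}"
  let ?Q = "\<lambda>k. \<Prod>j\<in>{1..c k}. [:- z k + of_int s * of_nat j * h, 1:]"
  have T: "Tpoly h z p s c = prod ?Q ?K"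
    unfolding Tpoly_def by (rule prod.mono_neutral_right) (auto simp: assms)
  have "prod ?Q ?K * typical_zpoly z p a b = (\<Prod>k\<in>?K. ?Q k * [:- z k, 1:])"
    unfolding typical_zpoly_def by (rule prod.distrib[symmetric])
  also have "\<dots> = (\<Prod>k\<in>?K. shiftp h s (?Q k) * [:- z k + of_int s * of_nat (c k) * h, 1:])"
    by (rule prod.cong[OF refl]) (rule prod_linear_telescope)
  also have "\<dots> = shiftp h s (prod ?Q ?K) * phipoly h z p a b s c"
    by (simp only: prod.distrib shiftp_prod phipoly_def)
  finally show ?thesis using T by simp
qed

lemma Fract_Tpoly_ratio:
  assumes "\<And>k. k < p \<Longrightarrow> a k + b k = 0 \<Longrightarrow> c k = 0" and "v \<noteq> 0"
  shows "Fract (Tpoly h z p s c * u) (shiftp h s (Tpoly h z p s c) * v)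
       = Fract (phipoly h z p a b s c * u) (typical_zpoly z p a b * v)"
  using Tpoly_telescope[OF assms(1)] assms(2)
  by (simp add: eq_fract Tpoly_nonzero typical_zpoly_nonzero shiftp_eq_0_iff)

lemma phipoly_atil:
  "phipoly h z p a b s (atil a b) = shiftp h (- s) (phipoly h z p a b s b)"
  unfolding phipoly_def shiftp_prod
  by (rule prod.cong[OF refl]) (simp add: atil_def shiftp_linear algebra_simps)

lemma phipoly_btil:
  assumes "\<And>k. k < p \<Longrightarrow> a k = 0 \<Longrightarrow> b k = 0"
  shows "phipoly h z p a b s (btil a b) = shiftp h s (phipoly h z p a b s a)"
  unfolding phipoly_def shiftp_prod
proof (rule prod.cong[OF refl])
  fix k assume k: "k \<in> {k. k < p \<and> a k + b k \<noteq> 0}"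
  then have "a k \<ge> 1" using assms by fastforce
  then have a_pred: "of_nat (a k - Suc 0) = (of_nat (a k) - 1 :: complex)"
    by (simp add: of_nat_diff)
  from k show "[:- z k + of_int s * of_nat (btil a b k) * h, 1:]
      = shiftp h s [:- z k + of_int s * of_nat (a k) * h, 1:]"
    by (simp add: btil_def shiftp_linear a_pred algebra_simps)
qed

lemma poly_phipoly_eq_0_iff:
  "poly (phipoly h z p a b s c) t = 0 \<longleftrightarrow>
   (\<exists>k<p. a k + b k \<noteq> 0 \<and> t = z k - of_int s * of_nat (c k) * h)"
  by (auto simp: phipoly_def poly_prod prod_zero_iff algebra_simps)

lemma phipoly_opposite_signs_neq:
  assumes "h \<noteq> 0" "s \<noteq> 0" "h_generic h p z" "\<exists>k<p. a k + b k \<noteq> 0"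
  shows "phipoly h z p a b s a \<noteq> phipoly h z p a b (- s) b"
proof
  assume eq: "phipoly h z p a b s a = phipoly h z p a b (- s) b"
  obtain k where k: "k < p" "a k + b k \<noteq> 0" using assms(4) by blast
  have "poly (phipoly h z p a b s a) (z k - of_int s * of_nat (a k) * h) = 0"
    using k by (auto simp: poly_phipoly_eq_0_iff)
  then obtain j where j: "j < p" "a j + b j \<noteq> 0"
    and "z k - of_int s * of_nat (a k) * h = z j + of_int s * of_nat (b j) * h"
    unfolding eq poly_phipoly_eq_0_iff by auto
  then have diff: "z k - z j = of_int (s * int (a k + b j)) * h"
    by (simp add: algebra_simps)
  show False
  proof (cases "j = k")
    case True
    with k assms(2) have "s * int (a k + b j) \<noteq> 0" by auto
    then have "of_int (s * int (a k + b j)) \<noteq> (0 :: complex)" by (simp only: of_int_eq_0_iff) simp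
    with diff True assms(1) show False by simp
  next
    case False
    with diff k j assms(3) show False unfolding h_generic_def by blast
  qed
qed

lemma Fract_diff_factor:
  fixes q1 q2 u v w d :: "'a::idom"
  assumes "d \<noteq> 0" "v \<noteq> 0" "q1 - q2 = v * w"
  shows "Fract (q1 * u) (d * v) - Fract (q2 * u) (d * v) = Fract (w * u) d"
proof -
  have "Fract (q1 * u) (d * v) - Fract (q2 * u) (d * v) = Fract ((q1 - q2) * u) (d * v)"
    using assms(1,2) by (simp add: eq_fract algebra_simps)
  also have "\<dots> = Fract (v * (w * u)) (v * d)"
    using assms(3) by (simp add: mult_ac)
  finally show ?thesis using assms(2) by (simp add: mult_fract_cancel)
qed

lemma signed_Tpoly_ratio_sum:
  assumes "\<And>k. k < p \<Longrightarrow> a k + b k = 0 \<Longrightarrow> c k = 0"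
    and "\<And>k. k < p \<Longrightarrow> a k + b k = 0 \<Longrightarrow> c' k = 0"
    and "v \<noteq> 0" and "phipoly h z p a b s c - phipoly h z p a b (- s) c' = v * w"
  shows "of_int s * Fract (Tpoly h z p s c * u) (shiftp h s (Tpoly h z p s c) * v)
       + of_int (- s) * Fract (Tpoly h z p (- s) c' * u) (shiftp h (- s) (Tpoly h z p (- s) c') * v)
       = of_int s * Fract (w * u) (typical_zpoly z p a b)"
proof -
  have "of_int s * Fract (Tpoly h z p s c * u) (shiftp h s (Tpoly h z p s c) * v)
      + of_int (- s) * Fract (Tpoly h z p (- s) c' * u) (shiftp h (- s) (Tpoly h z p (- s) c') * v)
      = of_int s * (Fract (phipoly h z p a b s c * u) (typical_zpoly z p a b * v)
                  - Fract (phipoly h z p a b (- s) c' * u) (typical_zpoly z p a b * v))"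
    by (subst (1 2) Fract_Tpoly_ratio) (use assms(1-3) in \<open>simp_all add: algebra_simps\<close>)
  also have "\<dots> = of_int s * Fract (w * u) (typical_zpoly z p a b)"
    using Fract_diff_factor[OF typical_zpoly_nonzero assms(3,4)] by simp
  finally show ?thesis .
qed

theorem lemma4p4:
  fixes h :: complex and p l :: nat and a b :: "nat \<Rightarrow> nat" and z :: "nat \<Rightarrow> complex"
    and s1 s2 :: int and y yt :: "complex poly"
  assumes h: "h \<noteq> 0"
    and s: "(s1, s2) \<in> {(1, -1), (-1, 1)}"
    and wt: "\<And>k. k < p \<Longrightarrow> a k = 0 \<Longrightarrow> b k = 0"
    and typical: "\<exists>k<p. a k + b k \<noteq> 0"
    and gen: "h_generic h p z"
    and ymonic: "lead_coeff y = 1" and ydeg: "degree y = l"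
    and BAE: "\<And>t. poly y t = 0 \<Longrightarrow>
        poly (phipoly h z p a b s2 b) t \<noteq> 0 \<and>
        poly (phipoly h z p a b s1 a) t / poly (phipoly h z p a b s2 b) t = 1 \<and>
        order t y \<le> order t (phipoly h z p a b s1 a - phipoly h z p a b s2 b)"
    and yt: "y * shiftp h (- s1) yt = phipoly h z p a b s1 a - phipoly h z p a b s2 b"
  shows "of_int s1 * Fract (Tpoly h z p s1 a * shiftp h s1 y) (shiftp h s1 (Tpoly h z p s1 a) * y)
       + of_int s2 * Fract (Tpoly h z p s2 b * shiftp h (- s2) y) (shiftp h s2 (Tpoly h z p s2 b) * y)
       = of_int s2 * Fract (Tpoly h z p s2 (atil a b) * shiftp h s2 yt)
                          (shiftp h s2 (Tpoly h z p s2 (atil a b)) * yt)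
       + of_int s1 * Fract (Tpoly h z p s1 (btil a b) * shiftp h (- s1) yt)
                          (shiftp h s1 (Tpoly h z p s1 (btil a b)) * yt)"
proof -
  from s have s2: "s2 = - s1" and "s1 \<noteq> 0" by auto
  have y_nonzero: "y \<noteq> 0" using ymonic by auto
  have "phipoly h z p a b s1 a \<noteq> phipoly h z p a b s2 b"
    unfolding s2 using phipoly_opposite_signs_neq h \<open>s1 \<noteq> 0\<close> gen typical by blast
  with yt have yt_nonzero: "yt \<noteq> 0" by (auto simp: shiftp_def)
  have yt_shifted: "phipoly h z p a b s1 (btil a b) - phipoly h z p a b (- s1) (atil a b)
      = yt * shiftp h s1 y"
    using arg_cong[OF yt, of "shiftp h s1"]
    by (simp add: s2 phipoly_atil phipoly_btil[OF wt] shiftp_mult shiftp_diff shiftp_shiftp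
        shiftp_0 mult.commute)
  have "of_int s1 * Fract (Tpoly h z p s1 a * shiftp h s1 y) (shiftp h s1 (Tpoly h z p s1 a) * y)
      + of_int (- s1) * Fract (Tpoly h z p (- s1) b * shiftp h s1 y)
                              (shiftp h (- s1) (Tpoly h z p (- s1) b) * y)
      = of_int s1 * Fract (shiftp h (- s1) yt * shiftp h s1 y) (typical_zpoly z p a b)"
    using y_nonzero yt wt unfolding s2 by (intro signed_Tpoly_ratio_sum) auto
  moreover have "of_int s1 * Fract (Tpoly h z p s1 (btil a b) * shiftp h (- s1) yt)
                                   (shiftp h s1 (Tpoly h z p s1 (btil a b)) * yt)
      + of_int (- s1) * Fract (Tpoly h z p (- s1) (atil a b) * shiftp h (- s1) yt)
                              (shiftp h (- s1) (Tpoly h z p (- s1) (atil a b)) * yt)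
      = of_int s1 * Fract (shiftp h s1 y * shiftp h (- s1) yt) (typical_zpoly z p a b)"
    using yt_nonzero yt_shifted by (intro signed_Tpoly_ratio_sum) (auto simp: atil_def btil_def)
  ultimately show ?thesis
    unfolding s2 minus_minus by (simp add: add.commute mult.commute)
qed

end
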